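(* Let $x_s<x_t$ be integers, let $C\ge 0$, and let $f:[x_s,x_t]\to\mathbb{R}$ be such that $([x_s,x_t],f)$ is an Ameso($C$) pair. Suppose there exist $x^0\in[x_s,x_t]$ and a positive integer $b$ with $[x^0,x^0+b]\subseteq[x_s,x_t]$ such that $f(x^0)=\min_{y\in[x_s,x^0+b]}f(y)$ and $f(x^0)+C\le \max_{y\in[x^0,x^0+b]}f(y)$. Then $f(x^0)=\min_{y\in[x_s,x_t]}f(y)$.
   Context: For integers $a\le b$, $[a,b]$ denotes the set of integers $\{a,a+1,\dots,b\}$ (similarly $(a,b]$ and $[a,b)$ denote integer sets). Floors and ceilings of vectors are taken componentwise. A set $D^n\subseteq\mathbb{Z}^n$ is an Ameso set if $\lceil(\vec x+\vec y)/2\rceil,\lfloor(\vec x+\vec y)/2\rfloor\in D^n$ for all $\vec x,\vec y\in D^n$. For $C\ge 0$, $(D^n,f)$ is an Ameso($C$) pair if $D^n$ is an Ameso set, $f:D^n\to\mathbb{R}$ is bounded below, and $f(\vec x)+f(\vec y)+C\ge f(\lceil(\vec x+\vec y)/2\rceil)+f(\lfloor(\vec x+\vec y)/2\rfloor)$ for all $\vec x,\vec y\in D^n$. *)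

theory Defs
  imports Complex_Main
begin

text \<open>One-dimensional instances (n = 1) of the paper's notions.
  Ceiling and floor of (x+y)/2 are taken of the real number (x+y)/2.\<close>

definition ameso_set :: "int set \<Rightarrow> bool" where
  "ameso_set D \<longleftrightarrow> (\<forall>x\<in>D. \<forall>y\<in>D.
      \<lceil>real_of_int (x + y) / 2\<rceil> \<in> D \<and> \<lfloor>real_of_int (x + y) / 2\<rfloor> \<in> D)"

definition ameso_pair :: "real \<Rightarrow> int set \<Rightarrow> (int \<Rightarrow> real) \<Rightarrow> bool" where
  "ameso_pair C D f \<longleftrightarrow> ameso_set D \<and> (\<exists>m. \<forall>x\<in>D. m \<le> f x) \<and>
     (\<forall>x\<in>D. \<forall>y\<in>D. f x + f y + C \<ge>
        f \<lceil>real_of_int (x + y) / 2\<rceil> + f \<lfloor>real_of_int (x + y) / 2\<rfloor>)"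

end

theory Submission
  imports Defs
begin

text \<open>Suppose some \<open>y > x\<^sup>0 + b\<close> had \<open>f y < f x\<^sup>0\<close>, and let \<open>w\<close> be the rightmost maximiser of \<open>f\<close>
  on \<open>(x\<^sup>0, y)\<close>. Reflecting an endpoint through \<open>w\<close> writes \<open>w\<close> as a midpoint: of \<open>x\<^sup>0\<close> and a point
  right of \<open>w\<close> (where \<open>f < f w\<close>), of \<open>x\<^sup>0\<close> and \<open>y\<close>, or of a point of \<open>(x\<^sup>0, y)\<close> and \<open>y\<close>. In each case
  the Ameso(\<open>C\<close>) inequality forces \<open>f w < f x\<^sup>0 + C\<close>, so \<open>f\<close> stays below \<open>f x\<^sup>0 + C\<close> on \<open>(x\<^sup>0, y)\<close>,
  contradicting that it reaches \<open>f x\<^sup>0 + C\<close> on \<open>(x\<^sup>0, x\<^sup>0 + b]\<close>.\<close>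

lemma ameso_pair_midpoint_le:
  assumes "ameso_pair C D f" "a \<in> D" "c \<in> D" "a + c = 2 * w"
  shows "2 * f w \<le> f a + f c + C"
proof -
  have "real_of_int (a + c) / 2 = real_of_int w"
    using assms(4) by simp
  then show ?thesis
    using assms(1-3) unfolding ameso_pair_def by fastforce
qed

lemma finite_rightmost_maximiser:
  fixes f :: "'a::linorder \<Rightarrow> 'b::linorder"
  assumes "finite S" "S \<noteq> {}"
  obtains w where "w \<in> S" "\<And>t. t \<in> S \<Longrightarrow> f t \<le> f w" "\<And>t. t \<in> S \<Longrightarrow> w < t \<Longrightarrow> f t < f w"
proof -
  define T where "T = {t \<in> S. f t = Max (f ` S)}"
  have "Max (f ` S) \<in> f ` S"
    using assms by simp
  then have "finite T" "T \<noteq> {}"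
    using assms(1) by (auto simp: T_def)
  then have "Max T \<in> T" "\<And>t. t \<in> T \<Longrightarrow> t \<le> Max T"
    by simp_all
  moreover have "\<And>t. t \<in> S \<Longrightarrow> f t \<le> Max (f ` S)"
    using assms(1) by simp
  ultimately show ?thesis
    by (intro that[of "Max T"]) (fastforce simp: T_def not_le[symmetric])+
qed

lemma midpoint_ineq_between_lt:
  fixes f :: "int \<Rightarrow> real"
  assumes midpoint: "\<And>a c w. a \<in> {x..z} \<Longrightarrow> c \<in> {x..z} \<Longrightarrow> a + c = 2 * w \<Longrightarrow>
      2 * f w \<le> f a + f c + C"
    and "C \<ge> 0" "f z < f x" "x < v" "v < z"
  shows "f v < f x + C"
proof -
  obtain w where w: "w \<in> {x<..<z}"
    and max: "\<And>t. t \<in> {x<..<z} \<Longrightarrow> f t \<le> f w"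
    and rightmost: "\<And>t. t \<in> {x<..<z} \<Longrightarrow> w < t \<Longrightarrow> f t < f w"
  proof (rule finite_rightmost_maximiser[of _ f])
    show "{x<..<z} \<noteq> {}"
      using assms(4,5) by auto
  qed auto
  have "f w < f x + C"
  proof (cases "2 * w" "x + z" rule: linorder_cases)
    case less
    then have "2 * w - x \<in> {x<..<z}" "w < 2 * w - x"
      using w by auto
    then show ?thesis
      using midpoint[of x "2 * w - x" w] rightmost[of "2 * w - x"] by force
  next
    case equal
    then show ?thesis
      using midpoint[of x z w] w assms(2,3) by force
  next
    case greater
    then have "2 * w - z \<in> {x<..<z}"
      using w by auto
    then show ?thesis
      using midpoint[of "2 * w - z" z w] max[of "2 * w - z"] assms(3) by force
  qed
  then show ?thesis
    using max[of v] assms(4,5) by force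
qed

lemma obtain_point_right_of_min_ge_min_plus:
  fixes f :: "int \<Rightarrow> real"
  assumes "C \<ge> 0" "b > 0" "\<And>y. y \<in> {x0..x0 + int b} \<Longrightarrow> f x0 \<le> f y"
    and "f x0 + C \<le> Max (f ` {x0..x0 + int b})"
  obtains v where "x0 < v" "v \<le> x0 + int b" "f x0 + C \<le> f v"
proof -
  obtain u where u: "u \<in> {x0..x0 + int b}" "f u = Max (f ` {x0..x0 + int b})"
    using Max_in[of "f ` {x0..x0 + int b}"] by fastforce
  show ?thesis
  proof (cases "u = x0")
    case True
    \<comment> \<open>then \<open>C = 0\<close>, and any point right of the minimiser \<open>x0\<close> will do\<close>
    then show ?thesis
      using that[of "x0 + 1"] assms u by force
  next
    case False
    then show ?thesis
      using that[of u] assms(4) u by auto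
  qed
qed

theorem theorem1:
  fixes xs xt :: int and C :: real and f :: "int \<Rightarrow> real" and x0 :: int and b :: nat
  assumes "xs < xt"
    and "C \<ge> 0"
    and "ameso_pair C {xs..xt} f"
    and "x0 \<in> {xs..xt}"
    and "b > 0"
    and "{x0..x0 + int b} \<subseteq> {xs..xt}"
    and "f x0 = Min (f ` {xs..x0 + int b})"
    and "f x0 + C \<le> Max (f ` {x0..x0 + int b})"
  shows "f x0 = Min (f ` {xs..xt})"
proof -
  have near: "f x0 \<le> f y" if "y \<in> {xs..x0 + int b}" for y
    using assms(7) that by simp
  obtain v where v: "x0 < v" "v \<le> x0 + int b" "f x0 + C \<le> f v"
    using obtain_point_right_of_min_ge_min_plus[of C b x0 f] assms(2,4,5,8) near by auto
  have "f x0 \<le> f y" if y: "y \<in> {xs..xt}" for y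
  proof (cases "y \<le> x0 + int b")
    case True
    then show ?thesis using near y by simp
  next
    case False
    have "\<not> f y < f x0"
      using midpoint_ineq_between_lt[of x0 y f C v] ameso_pair_midpoint_le[OF assms(3)]
        assms(2,4) y v False by force
    then show ?thesis by simp
  qed
  then show ?thesis
    using assms(4) by (intro sym[OF Min_eqI]) auto
qed

end
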